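(* Each of the functions $\theta\mapsto\mathbf{u}'(\theta)\cdot\mathbf{u}(\theta)$ and $\theta\mapsto\mathbf{v}'(\theta)\cdot\mathbf{v}(\theta)$ is either strictly positive on all of $(\theta^-,\theta^+)$ or strictly negative on all of $(\theta^-,\theta^+)$. Consequently $|\mathbf{u}(\theta)|$ and $|\mathbf{v}(\theta)|$ are strictly monotonic on $(\theta^-,\theta^+)$.
   Context: Design and mechanism parameterization. Fix $\mathbf{t}_1^r,\dots,\mathbf{t}_4^r\in\mathbb{R}^3$ with $\mathbf{t}_i^r\cdot(\mathbf{t}_j^r\times\mathbf{t}_k^r)\neq0$ for $ijk\in\{123,234,341,412\}$, $\mathrm{conv}\{\mathbf{0},\mathbf{t}_1^r,\mathbf{t}_2^r\}\cap\mathrm{conv}\{\mathbf{0},\mathbf{t}_3^r,\mathbf{t}_4^r\}=\{\mathbf{0}\}$, $\mathrm{conv}\{\mathbf{0},\mathbf{t}_1^r,\mathbf{t}_4^r\}\cap\mathrm{conv}\{\mathbf{0},\mathbf{t}_2^r,\mathbf{t}_3^r\}=\{\mathbf{0}\}$, and $\mathbf{u}_0:=\mathbf{t}_1^r-\mathbf{t}_3^r$, $\mathbf{v}_0:=\mathbf{t}_2^r-\mathbf{t}_4^r$ with $\mathbf{u}_0\cdot\mathbf{e}_3=\mathbf{v}_0\cdot\mathbf{e}_3=0$, $\mathbf{e}_3\cdot(\mathbf{u}_0\times\mathbf{v}_0)>0$. For nonzero $\mathbf{t}$ let $\mathbf{R}_{\mathbf{t}}(\varphi):=|\mathbf{t}|^{-2}\mathbf{t}\otimes\mathbf{t}+\cos\varphi(\mathbf{I}-|\mathbf{t}|^{-2}\mathbf{t}\otimes\mathbf{t})+|\mathbf{t}|^{-1}\sin\varphi(\mathbf{t}\times)$.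 Set $\mathbf{t}_2^d(\gamma):=\mathbf{R}_{\mathbf{t}_1^r}(\gamma)\mathbf{t}_2^r$, $\mathbf{t}_3^d(\theta):=\mathbf{R}_{\mathbf{t}_4^r}(\theta)\mathbf{t}_3^r$. $(\theta^-,\theta^+)$ is the maximal open interval containing $0$ on which there is a unique $C^1$ function $\gamma$ with $\gamma(0)=0$, $\mathbf{t}_2^d(\gamma(\theta))\cdot\mathbf{t}_3^d(\theta)=\mathbf{t}_2^r\cdot\mathbf{t}_3^r$ and with the four triple products of $(\mathbf{t}_1^r,\mathbf{t}_2^d(\gamma(\theta)),\mathbf{t}_3^d(\theta),\mathbf{t}_4^r)$ indexed by $ijk\in\{123,234,341,412\}$ having the same signs as those of $(\mathbf{t}_1^r,\dots,\mathbf{t}_4^r)$; $\gamma$ is analytic. Fix an analytic $\mathbf{R}_0:(\theta^-,\theta^+)\to SO(3)$ with $\mathbf{R}_0(0)=\mathbf{I}$ such that $\mathbf{t}_1(\theta):=\mathbf{R}_0(\theta)\mathbf{t}_1^r$, $\mathbf{t}_2(\theta):=\mathbf{R}_0(\theta)\mathbf{t}_2^d(\gamma(\theta))$, $\mathbf{t}_3(\theta):=\mathbf{R}_0(\theta)\mathbf{t}_3^d(\theta)$, $\mathbf{t}_4(\theta):=\mathbf{R}_0(\theta)\mathbf{t}_4^r$ give $\mathbf{u}(\theta):=\mathbf{t}_1(\theta)-\mathbf{t}_3(\theta)$, $\mathbf{v}(\theta):=\mathbf{t}_2(\theta)-\mathbf{t}_4(\theta)$ with $\mathbf{e}_3\cdot\mathbf{u}=\mathbf{e}_3\cdot\mathbf{v}=0$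 and $\mathbf{e}_3\cdot(\mathbf{u}\times\mathbf{v})>0$. Primes denote $d/d\theta$. *)

theory Defs
  imports "HOL-Analysis.Analysis"
begin

definition triple :: "real^3 \<Rightarrow> real^3 \<Rightarrow> real^3 \<Rightarrow> real" where
  "triple a b c = a \<bullet> cross3 b c"

definition rot :: "real^3 \<Rightarrow> real \<Rightarrow> real^3 \<Rightarrow> real^3" where
  "rot t \<phi> x = ((t \<bullet> x) / (norm t)^2) *\<^sub>R t
      + cos \<phi> *\<^sub>R (x - ((t \<bullet> x) / (norm t)^2) *\<^sub>R t)
      + (sin \<phi> / norm t) *\<^sub>R cross3 t x"

definition same_signs :: "real^3 \<Rightarrow> real^3 \<Rightarrow> real^3 \<Rightarrow> real^3 \<Rightarrow>
    real^3 \<Rightarrow> real^3 \<Rightarrow> real^3 \<Rightarrow> real^3 \<Rightarrow> bool" where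
  "same_signs a1 a2 a3 a4 b1 b2 b3 b4 \<longleftrightarrow>
     sgn (triple a1 a2 a3) = sgn (triple b1 b2 b3) \<and>
     sgn (triple a2 a3 a4) = sgn (triple b2 b3 b4) \<and>
     sgn (triple a3 a4 a1) = sgn (triple b3 b4 b1) \<and>
     sgn (triple a4 a1 a2) = sgn (triple b4 b1 b2)"

definition gamma_ok :: "real^3 \<Rightarrow> real^3 \<Rightarrow> real^3 \<Rightarrow> real^3 \<Rightarrow> real set \<Rightarrow> (real \<Rightarrow> real) \<Rightarrow> bool" where
  "gamma_ok t1 t2 t3 t4 I g \<longleftrightarrow>
     g C1_differentiable_on I \<and> g 0 = 0 \<and>
     (\<forall>\<theta>\<in>I. rot t1 (g \<theta>) t2 \<bullet> rot t4 \<theta> t3 = t2 \<bullet> t3 \<and>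
              same_signs t1 (rot t1 (g \<theta>) t2) (rot t4 \<theta> t3) t4 t1 t2 t3 t4)"

definition valid_interval :: "real^3 \<Rightarrow> real^3 \<Rightarrow> real^3 \<Rightarrow> real^3 \<Rightarrow> real set \<Rightarrow> bool" where
  "valid_interval t1 t2 t3 t4 I \<longleftrightarrow>
     is_interval I \<and> open I \<and> 0 \<in> I \<and>
     (\<exists>g. gamma_ok t1 t2 t3 t4 I g \<and>
          (\<forall>h. gamma_ok t1 t2 t3 t4 I h \<longrightarrow> (\<forall>\<theta>\<in>I. h \<theta> = g \<theta>)))"

definition maximal_interval :: "real^3 \<Rightarrow> real^3 \<Rightarrow> real^3 \<Rightarrow> real^3 \<Rightarrow> real set \<Rightarrow> bool" where
  "maximal_interval t1 t2 t3 t4 I \<longleftrightarrow>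
     valid_interval t1 t2 t3 t4 I \<and>
     (\<forall>J. valid_interval t1 t2 t3 t4 J \<longrightarrow> J \<subseteq> I)"

definition real_analytic_on :: "(real \<Rightarrow> 'a::real_normed_vector) \<Rightarrow> real set \<Rightarrow> bool" where
  "real_analytic_on f S \<longleftrightarrow>
     (\<forall>x\<in>S. \<exists>r>0. \<exists>c::nat \<Rightarrow> 'a. \<forall>y. \<bar>y - x\<bar> < r \<longrightarrow>
        (\<lambda>n. ((y - x) ^ n) *\<^sub>R c n) sums f y)"

definition SO3 :: "(real^3^3) set" where
  "SO3 = {R. orthogonal_matrix R \<and> det R = 1}"

definition e3 :: "real^3" where
  "e3 = axis 3 1"

end

theory Submission
  imports Defs
begin

text \<open>Since \<open>R\<^sub>0(\<theta>)\<close> is orthogonal, \<open>u'\<cdot>u\<close> and \<open>v'\<cdot>v\<close> equal the corresponding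
  quantities for the unrotated diagonals \<open>t\<^sub>1 - t\<^sub>3\<^sup>d(\<theta>)\<close> and \<open>t\<^sub>2\<^sup>d(\<gamma>(\<theta>)) - t\<^sub>4\<close>.
  For the first, the rotation about \<open>t\<^sub>4\<close> gives the value \<open>[t\<^sub>3\<^sup>d, t\<^sub>4, t\<^sub>1] / |t\<^sub>4|\<close>.
  For the second, with \<open>\<omega> = \<gamma>'/|t\<^sub>1|\<close> one gets \<open>-\<omega> [t\<^sub>4, t\<^sub>1, t\<^sub>2\<^sup>d]\<close>, while
  differentiating the constraint \<open>t\<^sub>2\<^sup>d \<cdot> t\<^sub>3\<^sup>d = const\<close> gives
  \<open>\<omega> [t\<^sub>1, t\<^sub>2\<^sup>d, t\<^sub>3\<^sup>d] = [t\<^sub>2\<^sup>d, t\<^sub>3\<^sup>d, t\<^sub>4] / |t\<^sub>4|\<close>; eliminating \<omega> expresses the sign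
  of \<open>v'\<cdot>v\<close> through the triple products 123, 234, 412. All these triple products keep their
  signs along the motion, and \<open>|u|\<^sup>2\<close>, \<open>|v|\<^sup>2\<close> have derivatives \<open>2u'\<cdot>u\<close>, \<open>2v'\<cdot>v\<close>.\<close>

lemma orthogonal_matrix_inner_mult:
  fixes R :: "real^'n^'n"
  assumes "orthogonal_matrix R"
  shows "(R *v x) \<bullet> (R *v y) = x \<bullet> y"
proof -
  have "orthogonal_transformation (\<lambda>x. R *v x)"
    using assms orthogonal_transformation_matrix[of "\<lambda>x. R *v x"]
    by (simp add: matrix_vector_mul_linear)
  then show ?thesis by (simp add: orthogonal_transformation_def)
qed

lemma bounded_bilinear_matrix_vector_mult:
  "bounded_bilinear (\<lambda>(A::real^'n^'m) x. A *v x)"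
  unfolding bilinear_conv_bounded_bilinear[symmetric] bilinear_def
  by (auto simp: linear_iff algebra_simps scaleR_matrix_vector_assoc)

lemma power_series_differentiable_at_centre:
  fixes a :: "nat \<Rightarrow> real"
  assumes r: "r > 0" and sums: "\<And>y. \<bar>y - x\<bar> < r \<Longrightarrow> (\<lambda>n. a n * (y - x) ^ n) sums F y"
  shows "F differentiable (at x)"
proof -
  define g where "g h = (\<Sum>n. a n * h ^ n)" for h
  define g' where "g' = (\<Sum>n. diffs a n * 0^n)"
  have "summable (\<lambda>n. a n * (r/2) ^ n)"
    using sums[of "x + r/2"] r by (auto simp: sums_iff)
  then have "DERIV g 0 :> g'"
    unfolding g_def g'_def by (rule termdiffs_strong) (use r in auto)
  then have "DERIV g (x - x) :> g'"
    by simp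
  moreover have "DERIV (\<lambda>y. y - x) x :> 1"
    by (rule derivative_eq_intros refl)+ simp
  ultimately have shifted: "DERIV (\<lambda>y. g (y - x)) x :> g' * 1"
    by (rule DERIV_chain2)
  have "g (y - x) = F y" if "y \<in> ball x r" for y
    using sums that by (auto simp: g_def sums_iff dist_real_def abs_minus_commute)
  then have "DERIV F x :> g' * 1"
    by (intro has_field_derivative_transform_within_open[OF shifted open_ball]) (use r in auto)
  then show ?thesis
    using real_differentiable_def differentiableI by blast
qed

lemma real_analytic_on_imp_differentiable:
  fixes f :: "real \<Rightarrow> 'a::euclidean_space"
  assumes "real_analytic_on f S" "x \<in> S"
  shows "f differentiable (at x)"
proof -
  obtain r and c :: "nat \<Rightarrow> 'a" where r: "r > 0"
    and sums: "\<And>y. \<bar>y - x\<bar> < r \<Longrightarrow> (\<lambda>n. ((y - x) ^ n) *\<^sub>R c n) sums f y"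
    using assms unfolding real_analytic_on_def by blast
  have "(\<lambda>y. f y \<bullet> i) differentiable (at x)" if "i \<in> Basis" for i
  proof (rule power_series_differentiable_at_centre[OF r])
    fix y assume "\<bar>y - x\<bar> < r"
    from bounded_linear.sums[OF bounded_linear_inner_left sums[OF this]]
    show "(\<lambda>n. (c n \<bullet> i) * (y - x) ^ n) sums (f y \<bullet> i)"
      by (simp add: mult.commute)
  qed
  then show ?thesis
    using differentiable_componentwise_within[where S = UNIV] by blast
qed

lemma cross3_cross3_same: "cross3 a (cross3 a x) = (a \<bullet> x) *\<^sub>R a - (a \<bullet> a) *\<^sub>R x"
  by (simp add: cross3_simps) (auto simp: forall_3)

lemma rot_has_vector_derivative:
  assumes t: "t \<noteq> 0"
  shows "((\<lambda>\<phi>. rot t \<phi> x) has_vector_derivative cross3 t (rot t \<phi> x) /\<^sub>R norm t) (at \<phi>)"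
proof -
  let ?x_perp = "x - ((t \<bullet> x) / (norm t)^2) *\<^sub>R t"
  have d: "((\<lambda>\<phi>. rot t \<phi> x) has_vector_derivative
             (- sin \<phi>) *\<^sub>R ?x_perp + (cos \<phi> / norm t) *\<^sub>R cross3 t x) (at \<phi>)"
    unfolding rot_def using t by (auto intro!: derivative_eq_intros)
  have "cross3 t ?x_perp = cross3 t x"
    by (simp add: cross3_simps)
  then have "cross3 t (rot t \<phi> x) = cos \<phi> *\<^sub>R cross3 t x + (sin \<phi> / norm t) *\<^sub>R cross3 t (cross3 t x)"
    unfolding rot_def by (simp add: cross_add_right cross_mult_right)
  also have "\<dots> = norm t *\<^sub>R ((- sin \<phi>) *\<^sub>R ?x_perp + (cos \<phi> / norm t) *\<^sub>R cross3 t x)"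
    unfolding cross3_cross3_same using t
    by (simp add: algebra_simps power2_eq_square flip: power2_norm_eq_inner)
  finally show ?thesis using d t by simp
qed

lemma orthogonal_motion_has_vector_derivative:
  fixes R :: "real \<Rightarrow> real^'n^'n"
  assumes S: "open S" "\<theta> \<in> S" and orth: "\<forall>s\<in>S. orthogonal_matrix (R s)"
    and R: "R differentiable (at \<theta>)" and f: "(f has_vector_derivative f') (at \<theta>)"
  obtains g' where "((\<lambda>s. R s *v f s) has_vector_derivative g') (at \<theta>)"
    and "g' \<bullet> (R \<theta> *v f \<theta>) = f' \<bullet> f \<theta>"
proof -
  obtain R' where R': "(R has_vector_derivative R') (at \<theta>)"
    using R vector_derivative_works by blast
  define g where "g s = R s *v f s" for s
  define g' where "g' = R \<theta> *v f' + R' *v f \<theta>"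
  have g: "(g has_vector_derivative g') (at \<theta>)"
    unfolding g_def g'_def
    using bounded_bilinear.has_vector_derivative[OF bounded_bilinear_matrix_vector_mult R' f] .
  \<comment> \<open>differentiate \<open>|R f|\<^sup>2 = |f|\<^sup>2\<close>, valid on the open set S\<close>
  have "((\<lambda>s. g s \<bullet> g s) has_vector_derivative g \<theta> \<bullet> g' + g' \<bullet> g \<theta>) (at \<theta>)"
    using bounded_bilinear.has_vector_derivative[OF bounded_bilinear_inner g g] .
  then have "((\<lambda>s. f s \<bullet> f s) has_vector_derivative g \<theta> \<bullet> g' + g' \<bullet> g \<theta>) (at \<theta>)"
    by (rule has_vector_derivative_transform_within_open[OF _ S])
       (simp add: g_def orth orthogonal_matrix_inner_mult)
  moreover have "((\<lambda>s. f s \<bullet> f s) has_vector_derivative f \<theta> \<bullet> f' + f' \<bullet> f \<theta>) (at \<theta>)"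
    using bounded_bilinear.has_vector_derivative[OF bounded_bilinear_inner f f] .
  ultimately have "g' \<bullet> g \<theta> = f' \<bullet> f \<theta>"
    using vector_derivative_unique_at by (fastforce simp: inner_commute)
  with g show thesis
    unfolding g_def by (rule that)
qed

lemma strict_mono_on_if_DERIV_pos:
  fixes F :: "real \<Rightarrow> real"
  assumes "is_interval I" and "\<forall>s\<in>I. \<exists>y. DERIV F s :> y \<and> y > 0"
  shows "strict_mono_on I F"
proof (rule strict_mono_onI)
  fix r s assume "r \<in> I" "s \<in> I" "r < s"
  show "F r < F s"
  proof (rule DERIV_pos_imp_increasing[OF \<open>r < s\<close>])
    fix z assume "r \<le> z" "z \<le> s"
    with \<open>r \<in> I\<close> \<open>s \<in> I\<close> have "z \<in> I"
      using assms(1) unfolding is_interval_1 by blast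
    with assms(2) show "\<exists>y. DERIV F z :> y \<and> y > 0"
      by blast
  qed
qed

lemma strict_antimono_on_if_DERIV_neg:
  fixes F :: "real \<Rightarrow> real"
  assumes "is_interval I" and "\<forall>s\<in>I. \<exists>y. DERIV F s :> y \<and> y < 0"
  shows "strict_antimono_on I F"
proof (rule monotone_onI)
  fix r s assume "r \<in> I" "s \<in> I" "r < s"
  show "F r > F s"
  proof (rule DERIV_neg_imp_decreasing[OF \<open>r < s\<close>])
    fix z assume "r \<le> z" "z \<le> s"
    with \<open>r \<in> I\<close> \<open>s \<in> I\<close> have "z \<in> I"
      using assms(1) unfolding is_interval_1 by blast
    with assms(2) show "\<exists>y. DERIV F z :> y \<and> y < 0"
      by blast
  qed
qed

lemma norm_strict_monotone_if_inner_derivative_sgn: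
  fixes f :: "real \<Rightarrow> 'a::real_inner"
  assumes I: "is_interval I" and c: "c \<noteq> 0"
    and deriv: "\<forall>s\<in>I. \<exists>f'. (f has_vector_derivative f') (at s) \<and> sgn (f' \<bullet> f s) = c"
  shows "((\<forall>s\<in>I. vector_derivative f (at s) \<bullet> f s > 0) \<or>
          (\<forall>s\<in>I. vector_derivative f (at s) \<bullet> f s < 0)) \<and>
         (strict_mono_on I (\<lambda>s. norm (f s)) \<or> strict_antimono_on I (\<lambda>s. norm (f s)))"
proof -
  define D where "D s = vector_derivative f (at s) \<bullet> f s" for s
  have sq: "DERIV (\<lambda>s. f s \<bullet> f s) s :> 2 * D s" and sgn_D: "sgn (D s) = c" if s: "s \<in> I" for s
  proof -
    obtain f' where f': "(f has_vector_derivative f') (at s)" "sgn (f' \<bullet> f s) = c"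
      using deriv s by blast
    have "vector_derivative f (at s) = f'"
      using f'(1) by (rule vector_derivative_at)
    then have "D s = f' \<bullet> f s"
      by (simp add: D_def)
    with f' show "DERIV (\<lambda>s. f s \<bullet> f s) s :> 2 * D s" "sgn (D s) = c"
      using bounded_bilinear.has_vector_derivative[OF bounded_bilinear_inner f'(1) f'(1)]
      by (simp_all add: has_real_derivative_iff_has_vector_derivative inner_commute)
  qed
  consider "c > 0" | "c < 0"
    using c by linarith
  then show ?thesis
  proof cases
    case 1
    then have pos: "D s > 0" if "s \<in> I" for s
      using sgn_D[OF that] by (metis sgn_greater)
    have "strict_mono_on I (\<lambda>s. f s \<bullet> f s)"
    proof (rule strict_mono_on_if_DERIV_pos[OF I], intro ballI exI conjI)
      fix s assume "s \<in> I"
      then show "DERIV (\<lambda>s. f s \<bullet> f s) s :> 2 * D s" "2 * D s > 0"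
        using sq pos by simp_all
    qed
    then have "strict_mono_on I (\<lambda>s. norm (f s))"
      unfolding strict_mono_on_def power2_norm_eq_inner[symmetric]
      by (metis norm_ge_zero power_less_imp_less_base)
    with pos show ?thesis
      by (simp add: D_def)
  next
    case 2
    then have neg: "D s < 0" if "s \<in> I" for s
      using sgn_D[OF that] by (metis sgn_less)
    have "strict_antimono_on I (\<lambda>s. f s \<bullet> f s)"
    proof (rule strict_antimono_on_if_DERIV_neg[OF I], intro ballI exI conjI)
      fix s assume "s \<in> I"
      then show "DERIV (\<lambda>s. f s \<bullet> f s) s :> 2 * D s" "2 * D s < 0"
        using sq neg by simp_all
    qed
    then have "strict_antimono_on I (\<lambda>s. norm (f s))"
      unfolding monotone_on_def power2_norm_eq_inner[symmetric]
      by (metis norm_ge_zero power_less_imp_less_base)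
    with neg show ?thesis
      by (simp add: D_def)
  qed
qed

lemma inner_derivatives_cancel_if_inner_constant:
  fixes f g :: "real \<Rightarrow> 'a::real_inner"
  assumes S: "open S" "\<theta> \<in> S" and const: "\<forall>s\<in>S. f s \<bullet> g s = k"
    and f: "(f has_vector_derivative f') (at \<theta>)" and g: "(g has_vector_derivative g') (at \<theta>)"
  shows "f \<theta> \<bullet> g' + f' \<bullet> g \<theta> = 0"
proof -
  have "((\<lambda>s. f s \<bullet> g s) has_vector_derivative f \<theta> \<bullet> g' + f' \<bullet> g \<theta>) (at \<theta>)"
    using bounded_bilinear.has_vector_derivative[OF bounded_bilinear_inner f g] .
  moreover have "((\<lambda>s. f s \<bullet> g s) has_vector_derivative 0) (at \<theta>)"
    by (rule has_vector_derivative_transform_within_open[of "\<lambda>_. k", OF _ S])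
       (simp_all add: const)
  ultimately show ?thesis
    using vector_derivative_unique_at by blast
qed

lemma sgn_eq_minus_sgn_mult3:
  fixes a b c g x :: real
  assumes "a \<noteq> 0" and "g * a = b" and "x = - (g * c)"
  shows "sgn x = - sgn (a * b * c)"
proof -
  have "sgn (a * a) = 1"
    using assms(1) by (simp add: sgn_mult sgn_if)
  then have "sgn x = sgn (x * (a * a))"
    by (simp add: sgn_mult)
  also have "x * (a * a) = - (a * b * c)"
    unfolding assms(3) by (simp flip: assms(2) add: algebra_simps)
  finally show ?thesis
    by (simp add: sgn_minus)
qed

lemma rotating_diagonal_inner_derivative_sgn:
  fixes R :: "real \<Rightarrow> real^3^3"
  assumes t: "t \<noteq> 0" and I: "open I"
    and orth: "\<forall>s\<in>I. orthogonal_matrix (R s)" and R: "\<forall>s\<in>I. R differentiable (at s)"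
    and sgn_triple: "\<forall>s\<in>I. sgn (triple (rot t s b) t a) = c"
  shows "\<forall>s\<in>I. \<exists>u'. ((\<lambda>s. R s *v (a - rot t s b)) has_vector_derivative u') (at s) \<and>
                     sgn (u' \<bullet> (R s *v (a - rot t s b))) = c"
proof
  fix s assume s: "s \<in> I"
  define p where "p = rot t s b"
  define w' where "w' = - (inverse (norm t) *\<^sub>R cross3 t p)"
  have "((\<lambda>s. a - rot t s b) has_vector_derivative w') (at s)"
    unfolding w'_def p_def
    using has_vector_derivative_diff[OF has_vector_derivative_const rot_has_vector_derivative[OF t]]
    by (simp add: divide_inverse_commute)
  then obtain u' where u': "((\<lambda>s. R s *v (a - rot t s b)) has_vector_derivative u') (at s)"
    and u'_inner: "u' \<bullet> (R s *v (a - rot t s b)) = w' \<bullet> (a - p)"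
    using orthogonal_motion_has_vector_derivative[OF I s orth R[rule_format, OF s]]
    unfolding p_def by blast
  note u'_inner
  also have "w' \<bullet> (a - p) = inverse (norm t) * triple p t a"
    unfolding w'_def triple_def by (simp add: cross3_def inner_vec_def sum_3 algebra_simps)
  finally have "sgn (u' \<bullet> (R s *v (a - rot t s b))) = sgn (triple p t a)"
    using t by (simp add: sgn_mult)
  with u' sgn_triple s show "\<exists>u'. ((\<lambda>s. R s *v (a - rot t s b)) has_vector_derivative u') (at s) \<and>
                     sgn (u' \<bullet> (R s *v (a - rot t s b))) = c"
    unfolding p_def by auto
qed

lemma coupled_rotating_diagonal_inner_derivative_sgn:
  fixes R :: "real \<Rightarrow> real^3^3" and \<gamma> :: "real \<Rightarrow> real"
  assumes t1: "t1 \<noteq> 0" and t4: "t4 \<noteq> 0" and I: "open I"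
    and orth: "\<forall>s\<in>I. orthogonal_matrix (R s)" and R: "\<forall>s\<in>I. R differentiable (at s)"
    and \<gamma>: "\<forall>s\<in>I. \<gamma> differentiable (at s)"
    and coupled: "\<forall>s\<in>I. rot t1 (\<gamma> s) t2 \<bullet> rot t4 s t3 = k"
    and sgnA: "\<forall>s\<in>I. sgn (triple t1 (rot t1 (\<gamma> s) t2) (rot t4 s t3)) = sgn A" and A: "A \<noteq> 0"
    and sgnB: "\<forall>s\<in>I. sgn (triple (rot t1 (\<gamma> s) t2) (rot t4 s t3) t4) = sgn B"
    and sgnC: "\<forall>s\<in>I. sgn (triple t4 t1 (rot t1 (\<gamma> s) t2)) = sgn C"
  shows "\<forall>s\<in>I. \<exists>v'. ((\<lambda>s. R s *v (rot t1 (\<gamma> s) t2 - t4)) has_vector_derivative v') (at s) \<and>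
                     sgn (v' \<bullet> (R s *v (rot t1 (\<gamma> s) t2 - t4))) = - sgn (A * B * C)"
proof
  fix s assume s: "s \<in> I"
  define p where "p = rot t1 (\<gamma> s) t2"
  define q where "q = rot t4 s t3"
  obtain d\<gamma> where d\<gamma>: "(\<gamma> has_vector_derivative d\<gamma>) (at s)"
    using \<gamma> s vector_derivative_works by blast
  define \<omega> where "\<omega> = d\<gamma> / norm t1"
  have p': "((\<lambda>s. rot t1 (\<gamma> s) t2) has_vector_derivative \<omega> *\<^sub>R cross3 t1 p) (at s)"
    using vector_diff_chain_at[OF d\<gamma> rot_has_vector_derivative[OF t1]]
    by (simp add: o_def p_def \<omega>_def divide_inverse_commute mult.commute)
  have q': "((\<lambda>s. rot t4 s t3) has_vector_derivative inverse (norm t4) *\<^sub>R cross3 t4 q) (at s)"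
    using rot_has_vector_derivative[OF t4] by (simp add: q_def divide_inverse_commute)
  \<comment> \<open>differentiating the coupling yields the angular speed of \<open>p\<close>\<close>
  have "p \<bullet> (inverse (norm t4) *\<^sub>R cross3 t4 q) + (\<omega> *\<^sub>R cross3 t1 p) \<bullet> q = 0"
    using inner_derivatives_cancel_if_inner_constant[OF I s coupled p' q']
    by (simp add: p_def q_def)
  then have speed: "\<omega> * triple t1 p q = inverse (norm t4) * triple p q t4"
    unfolding triple_def by (simp add: cross3_def inner_vec_def sum_3 algebra_simps)
  have "((\<lambda>s. rot t1 (\<gamma> s) t2 - t4) has_vector_derivative \<omega> *\<^sub>R cross3 t1 p) (at s)"
    using has_vector_derivative_diff[OF p' has_vector_derivative_const] by simp
  then obtain v' where v': "((\<lambda>s. R s *v (rot t1 (\<gamma> s) t2 - t4)) has_vector_derivative v') (at s)"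
    and v'_inner: "v' \<bullet> (R s *v (rot t1 (\<gamma> s) t2 - t4)) = (\<omega> *\<^sub>R cross3 t1 p) \<bullet> (p - t4)"
    using orthogonal_motion_has_vector_derivative[OF I s orth R[rule_format, OF s]]
    unfolding p_def by blast
  have "(\<omega> *\<^sub>R cross3 t1 p) \<bullet> (p - t4) = - (\<omega> * triple t4 t1 p)"
    unfolding triple_def by (simp add: cross3_def inner_vec_def sum_3 algebra_simps)
  moreover have "triple t1 p q \<noteq> 0"
    using sgnA s A unfolding p_def q_def by (metis sgn_0_0)
  ultimately have "sgn (v' \<bullet> (R s *v (rot t1 (\<gamma> s) t2 - t4)))
      = - sgn (triple t1 p q * (inverse (norm t4) * triple p q t4) * triple t4 t1 p)"
    unfolding v'_inner using speed by (intro sgn_eq_minus_sgn_mult3)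
  also have "\<dots> = - sgn (A * B * C)"
    using sgnA sgnB sgnC s t4 unfolding p_def q_def by (simp add: sgn_mult)
  finally show "\<exists>v'. ((\<lambda>s. R s *v (rot t1 (\<gamma> s) t2 - t4)) has_vector_derivative v') (at s) \<and>
                     sgn (v' \<bullet> (R s *v (rot t1 (\<gamma> s) t2 - t4))) = - sgn (A * B * C)"
    using v' by blast
qed

theorem mainTheorem5:
  fixes t1r t2r t3r t4r :: "real^3"
    and I :: "real set"
    and \<gamma> :: "real \<Rightarrow> real"
    and R0 :: "real \<Rightarrow> real^3^3"
    and u v :: "real \<Rightarrow> real^3"
  assumes nz123: "triple t1r t2r t3r \<noteq> 0"
    and nz234: "triple t2r t3r t4r \<noteq> 0"
    and nz341: "triple t3r t4r t1r \<noteq> 0"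
    and nz412: "triple t4r t1r t2r \<noteq> 0"
    and conv1: "convex hull {0, t1r, t2r} \<inter> convex hull {0, t3r, t4r} = {0}"
    and conv2: "convex hull {0, t1r, t4r} \<inter> convex hull {0, t2r, t3r} = {0}"
    and u0: "(t1r - t3r) \<bullet> e3 = 0"
    and v0: "(t2r - t4r) \<bullet> e3 = 0"
    and uv0: "e3 \<bullet> cross3 (t1r - t3r) (t2r - t4r) > 0"
    and I_max: "maximal_interval t1r t2r t3r t4r I"
    and \<gamma>_ok: "gamma_ok t1r t2r t3r t4r I \<gamma>"
    and R0_an: "real_analytic_on R0 I"
    and R0_SO3: "\<forall>\<theta>\<in>I. R0 \<theta> \<in> SO3"
    and R0_0: "R0 0 = mat 1"
    and u_def: "u = (\<lambda>\<theta>. R0 \<theta> *v t1r - R0 \<theta> *v rot t4r \<theta> t3r)"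
    and v_def: "v = (\<lambda>\<theta>. R0 \<theta> *v rot t1r (\<gamma> \<theta>) t2r - R0 \<theta> *v t4r)"
    and u_plane: "\<forall>\<theta>\<in>I. e3 \<bullet> u \<theta> = 0"
    and v_plane: "\<forall>\<theta>\<in>I. e3 \<bullet> v \<theta> = 0"
    and uv_pos: "\<forall>\<theta>\<in>I. e3 \<bullet> cross3 (u \<theta>) (v \<theta>) > 0"
  shows "((\<forall>\<theta>\<in>I. vector_derivative u (at \<theta>) \<bullet> u \<theta> > 0) \<or>
          (\<forall>\<theta>\<in>I. vector_derivative u (at \<theta>) \<bullet> u \<theta> < 0)) \<and>
         ((\<forall>\<theta>\<in>I. vector_derivative v (at \<theta>) \<bullet> v \<theta> > 0) \<or>
          (\<forall>\<theta>\<in>I. vector_derivative v (at \<theta>) \<bullet> v \<theta> < 0)) \<and>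
         (strict_mono_on I (\<lambda>\<theta>. norm (u \<theta>)) \<or> strict_antimono_on I (\<lambda>\<theta>. norm (u \<theta>))) \<and>
         (strict_mono_on I (\<lambda>\<theta>. norm (v \<theta>)) \<or> strict_antimono_on I (\<lambda>\<theta>. norm (v \<theta>)))"
proof -
  have I: "is_interval I" "open I"
    using I_max by (simp_all add: maximal_interval_def valid_interval_def)
  have t1r: "t1r \<noteq> 0" and t4r: "t4r \<noteq> 0"
    using nz412 by (auto simp: triple_def)
  have orth: "\<forall>s\<in>I. orthogonal_matrix (R0 s)"
    using R0_SO3 by (simp add: SO3_def)
  have R0_diff: "\<forall>s\<in>I. R0 differentiable (at s)"
    using R0_an real_analytic_on_imp_differentiable by blast
  have \<gamma>_diff: "\<forall>s\<in>I. \<gamma> differentiable (at s)"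
    using \<gamma>_ok by (auto simp: gamma_ok_def C1_differentiable_on_def intro: differentiableI_vector)
  have signs: "\<forall>s\<in>I. same_signs t1r (rot t1r (\<gamma> s) t2r) (rot t4r s t3r) t4r t1r t2r t3r t4r"
    and coupled: "\<forall>s\<in>I. rot t1r (\<gamma> s) t2r \<bullet> rot t4r s t3r = t2r \<bullet> t3r"
    using \<gamma>_ok by (simp_all add: gamma_ok_def)
  have u_eq: "u = (\<lambda>s. R0 s *v (t1r - rot t4r s t3r))"
    and v_eq: "v = (\<lambda>s. R0 s *v (rot t1r (\<gamma> s) t2r - t4r))"
    by (simp_all add: u_def v_def matrix_vector_mult_diff_distrib)
  have u_deriv: "\<forall>s\<in>I. \<exists>u'. (u has_vector_derivative u') (at s) \<and>
      sgn (u' \<bullet> u s) = sgn (triple t3r t4r t1r)"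
    unfolding u_eq using signs
    by (intro rotating_diagonal_inner_derivative_sgn[OF t4r I(2) orth R0_diff])
      (simp add: same_signs_def)
  have v_deriv: "\<forall>s\<in>I. \<exists>v'. (v has_vector_derivative v') (at s) \<and>
      sgn (v' \<bullet> v s) = - sgn (triple t1r t2r t3r * triple t2r t3r t4r * triple t4r t1r t2r)"
    unfolding v_eq using signs nz123
    by (intro coupled_rotating_diagonal_inner_derivative_sgn[OF t1r t4r I(2) orth R0_diff \<gamma>_diff coupled])
      (simp_all add: same_signs_def)
  have "sgn (triple t3r t4r t1r) \<noteq> 0"
    and "- sgn (triple t1r t2r t3r * triple t2r t3r t4r * triple t4r t1r t2r) \<noteq> 0"
    using nz123 nz234 nz341 nz412 by (simp_all add: sgn_mult sgn_0_0)
  with norm_strict_monotone_if_inner_derivative_sgn[OF I(1) _ u_deriv]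
    norm_strict_monotone_if_inner_derivative_sgn[OF I(1) _ v_deriv]
  show ?thesis
    by blast
qed

end
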